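(* For positive integers $d$ and $q$, $\hom(K_{d,d}, H_q) \leq 2q \cdot c_q^{2d}$.
   Context: $K_{d,d}$ is the complete bipartite graph with parts of size $d$. $H_q$ is the graph (loops allowed) on vertex set $\{1,\dots,q\}$ in which $u,v$ (possibly equal) are adjacent iff $u+v \geq q$. $\hom(G,H)$ is the number of graph homomorphisms from $G$ to $H$. For $q \geq 1$, $c_q := \sqrt{\lfloor (q+2)^2/4 \rfloor}$. *)

theory Defs
  imports Complex_Main "HOL-Library.FuncSet"
begin

definition hom_count ::
  "'a set \<Rightarrow> ('a \<Rightarrow> 'a \<Rightarrow> bool) \<Rightarrow> 'b set \<Rightarrow> ('b \<Rightarrow> 'b \<Rightarrow> bool) \<Rightarrow> nat" where
  "hom_count VG EG VH EH =
     card {f \<in> VG \<rightarrow>\<^sub>E VH. \<forall>u\<in>VG. \<forall>v\<in>VG. EG u v \<longrightarrow> EH (f u) (f v)}"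

definition Kdd_V :: "nat \<Rightarrow> (nat \<times> bool) set" where
  "Kdd_V d = {..<d} \<times> UNIV"

definition Kdd_E :: "(nat \<times> bool) \<Rightarrow> (nat \<times> bool) \<Rightarrow> bool" where
  "Kdd_E x y \<longleftrightarrow> snd x \<noteq> snd y"

definition Hq_V :: "nat \<Rightarrow> nat set" where
  "Hq_V q = {1..q}"

definition Hq_E :: "nat \<Rightarrow> nat \<Rightarrow> nat \<Rightarrow> bool" where
  "Hq_E q u v \<longleftrightarrow> u + v \<ge> q"

definition c_q :: "nat \<Rightarrow> real" where
  "c_q q = sqrt (real_of_int \<lfloor>(real q + 2)^2 / 4\<rfloor>)"

end

theory Submission
  imports Defs
begin

text \<open>Let \<open>a\<close> be the least colour a homomorphism \<open>f : K_{d,d} \<rightarrow> H_q\<close> uses on the first side.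
  Then the first side takes colours in \<open>{a..q}\<close>, and since every vertex of the second side
  is adjacent to a vertex coloured \<open>a\<close>, the second side takes colours in \<open>{q-a..q}\<close>.
  So \<open>f\<close> lies in a box of size \<open>((q - a + 1)(a + 1))^d\<close>, and by AM-GM
  \<open>(q - a + 1)(a + 1) \<le> \<lfloor>(q + 2)^2/4\<rfloor> = c_q^2\<close>. Summing over the \<open>q\<close> choices of \<open>a\<close>
  gives even \<open>q c_q^{2d}\<close>.\<close>

lemma four_mult_le_square_add:
  fixes m n :: nat
  shows "4 * (m * n) \<le> (m + n)^2"
proof -
  have "int ((m + n)^2) - int (4 * (m * n)) = (int m - int n)^2"
    by (simp add: power2_eq_square algebra_simps)
  then have "int (4 * (m * n)) \<le> int ((m + n)^2)"
    by (metis diff_ge_0_iff_ge zero_le_power2)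
  then show ?thesis by (simp only: of_nat_le_iff)
qed

lemma c_q_square: "(c_q q)^2 = real ((q + 2)^2 div 4)"
proof -
  have "(real q + 2)^2 / 4 = real ((q + 2)^2) / real 4" by simp
  then have "\<lfloor>(real q + 2)^2 / 4\<rfloor> = int ((q + 2)^2 div 4)"
    by (metis floor_divide_of_nat_eq)
  then show ?thesis by (simp add: c_q_def)
qed

lemma mult_le_c_q_square:
  fixes a q :: nat
  assumes "a \<le> q"
  shows "real ((q - a + 1) * (a + 1)) \<le> (c_q q)^2"
proof -
  have "(q - a + 1) + (a + 1) = q + 2" using assms by simp
  then have "(q - a + 1) * (a + 1) \<le> (q + 2)^2 div 4"
    using four_mult_le_square_add[of "q - a + 1" "a + 1"] by simp
  then show ?thesis unfolding c_q_square by (simp only: of_nat_le_iff)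
qed

definition Kdd_box :: "nat \<Rightarrow> 'a set \<Rightarrow> 'a set \<Rightarrow> ((nat \<times> bool) \<Rightarrow> 'a) set" where
  "Kdd_box d A B = PiE (Kdd_V d) (\<lambda>x. if snd x then A else B)"

lemma card_Kdd_box: "card (Kdd_box d A B) = (card A * card B) ^ d"
proof -
  have "card (Kdd_box d A B) = (\<Prod>x\<in>{..<d} \<times> UNIV. card (if snd x then A else B))"
    unfolding Kdd_box_def Kdd_V_def by (simp add: card_PiE)
  also have "\<dots> = (\<Prod>i<d. \<Prod>s\<in>UNIV. card (if s then A else B))"
    using prod.cartesian_product[of "\<lambda>i s. card (if s then A else B)" UNIV "{..<d}"]
    by (simp add: case_prod_beta')
  also have "\<dots> = (card A * card B) ^ d"
    by (simp add: UNIV_bool mult.commute)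
  finally show ?thesis .
qed

lemma finite_Kdd_box:
  assumes "finite A" "finite B"
  shows "finite (Kdd_box d A B)"
  using assms unfolding Kdd_box_def Kdd_V_def by (intro finite_PiE) auto

lemma Kdd_hom_in_box:
  assumes "d \<ge> 1"
    and f: "f \<in> Kdd_V d \<rightarrow>\<^sub>E Hq_V q"
    and hom: "\<forall>u\<in>Kdd_V d. \<forall>v\<in>Kdd_V d. Kdd_E u v \<longrightarrow> Hq_E q (f u) (f v)"
  shows "\<exists>a\<in>{1..q}. f \<in> Kdd_box d {a..q} {q - a..q}"
proof -
  define L where "L = {..<d} \<times> {True}"
  have L: "L \<subseteq> Kdd_V d" "finite L" "L \<noteq> {}"
    using assms(1) unfolding L_def Kdd_V_def by (auto simp: lessThan_empty_iff)
  define a where "a = Min (f ` L)"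
  have "a \<in> f ` L" unfolding a_def using L by simp
  then obtain l where l: "l \<in> L" "f l = a" by blast
  have colour: "f x \<in> {1..q}" if "x \<in> Kdd_V d" for x
    using f that unfolding Hq_V_def by auto
  have "f x \<in> {a..q}" if "x \<in> Kdd_V d" "snd x" for x
  proof -
    have "x \<in> L" using that unfolding L_def Kdd_V_def by (cases x) auto
    then have "a \<le> f x" unfolding a_def using L by simp
    then show ?thesis using colour[OF that(1)] by simp
  qed
  moreover have "f x \<in> {q - a..q}" if "x \<in> Kdd_V d" "\<not> snd x" for x
  proof -
    have "Kdd_E l x" using l(1) that(2) unfolding L_def Kdd_E_def by auto
    then have "q \<le> a + f x" using hom l L(1) that(1) unfolding Hq_E_def by auto
    then show ?thesis using colour[OF that(1)] by simp
  qed
  ultimately have "f \<in> Kdd_box d {a..q} {q - a..q}"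
    using f unfolding Kdd_box_def by (auto simp: PiE_iff)
  moreover have "a \<in> {1..q}" using colour l L(1) by blast
  ultimately show ?thesis by blast
qed

lemma Kdd_homs_subset_boxes:
  assumes "d \<ge> 1"
  shows "{f \<in> Kdd_V d \<rightarrow>\<^sub>E Hq_V q. \<forall>u\<in>Kdd_V d. \<forall>v\<in>Kdd_V d. Kdd_E u v \<longrightarrow> Hq_E q (f u) (f v)}
    \<subseteq> (\<Union>a\<in>{1..q}. Kdd_box d {a..q} {q - a..q})"
proof
  fix f assume "f \<in> {f \<in> Kdd_V d \<rightarrow>\<^sub>E Hq_V q. \<forall>u\<in>Kdd_V d. \<forall>v\<in>Kdd_V d. Kdd_E u v \<longrightarrow> Hq_E q (f u) (f v)}"
  then obtain a where "a \<in> {1..q}" "f \<in> Kdd_box d {a..q} {q - a..q}"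
    using Kdd_hom_in_box[OF assms, of f q] by blast
  then show "f \<in> (\<Union>a\<in>{1..q}. Kdd_box d {a..q} {q - a..q})" by (rule UN_I)
qed

lemma card_Kdd_box_le:
  assumes "a \<in> {1..q}"
  shows "real (card (Kdd_box d {a..q} {q - a..q})) \<le> (c_q q)^(2 * d)"
proof -
  have "card (Kdd_box d {a..q} {q - a..q}) = ((q - a + 1) * (a + 1)) ^ d"
    using assms by (simp add: card_Kdd_box Suc_diff_le)
  then have "real (card (Kdd_box d {a..q} {q - a..q})) = real ((q - a + 1) * (a + 1)) ^ d"
    by simp
  also have "\<dots> \<le> ((c_q q)^2) ^ d"
    using assms mult_le_c_q_square[of a q] by (intro power_mono) auto
  finally show ?thesis by (simp add: power_mult)
qed

theorem lemma3p5:
  fixes d q :: nat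
  assumes "d \<ge> 1" and "q \<ge> 1"
  shows "real (hom_count (Kdd_V d) Kdd_E (Hq_V q) (Hq_E q)) \<le> 2 * real q * (c_q q) ^ (2 * d)"
proof -
  let ?box = "\<lambda>a. Kdd_box d {a..q} {q - a..q}"
  have "hom_count (Kdd_V d) Kdd_E (Hq_V q) (Hq_E q) \<le> card (\<Union>a\<in>{1..q}. ?box a)"
    unfolding hom_count_def using Kdd_homs_subset_boxes[OF assms(1)]
    by (rule card_mono[rotated]) (intro finite_UN_I finite_atLeastAtMost finite_Kdd_box)
  also have "\<dots> \<le> (\<Sum>a\<in>{1..q}. card (?box a))"
    by (rule card_UN_le) simp
  finally have "real (hom_count (Kdd_V d) Kdd_E (Hq_V q) (Hq_E q)) \<le> (\<Sum>a\<in>{1..q}. real (card (?box a)))"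
    unfolding of_nat_sum [symmetric] of_nat_le_iff .
  also have "\<dots> \<le> (\<Sum>a\<in>{1..q}. (c_q q)^(2 * d))"
    by (intro sum_mono card_Kdd_box_le)
  also have "\<dots> = real q * (c_q q)^(2 * d)"
    by simp
  also have "\<dots> \<le> 2 * real q * (c_q q)^(2 * d)"
    by (simp add: c_q_def)
  finally show ?thesis .
qed

end
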